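(* The $\alpha$-pass algorithm does not provide an approximation ratio better than $\frac12$ for the clique inference problem with nonnegative vertex potentials and entropy clique potentials $C(\mathbf{v})=\lambda\sum_{v\in V}n_v(\mathbf{v})\log n_v(\mathbf{v})$, $\lambda>0$: there is a family of such instances (indexed by the number of vertices $n$) on which the ratio of the score of the $\alpha$-pass output to the optimal score tends to at most $\frac12$ as $n\to\infty$.
   Context: Clique inference problem: there are $n$ vertices $1,\dots,n$, a finite set $V$ of values, real vertex potentials $\psi_{jv}$ ($1\le j\le n$, $v\in V$), and a clique potential $C$ depending only on the counts $n_v(\mathbf{v})=|\{j:v_j=v\}|$ (with $0\log 0=0$); the objective is $F(\mathbf{v})=\sum_j\psi_{jv_j}+C(\mathbf{v})$ over $\mathbf{v}\in V^n$. The $\alpha$-pass algorithm: for each $\alpha\in V$, sort the vertices in decreasing order of $\psi_{j\alpha}-\max_{v\neq\alpha}\psi_{jv}$; for each $k\in\{1,\dots,n\}$ form the assignment giving the first $k$ sorted vertices the value $\alpha$ and every other vertex a value $v\ne\alpha$ maximizing $\psi_{jv}$; output the formed assignment with the largest $F$ over all $\alpha$ and $k$. *)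

theory Defs
  imports Complex_Main "HOL-Library.FuncSet"
begin

definition xlogx :: "nat \<Rightarrow> real" where
  "xlogx m = (if m = 0 then 0 else real m * ln (real m))"

definition cnt :: "nat \<Rightarrow> (nat \<Rightarrow> nat) \<Rightarrow> nat \<Rightarrow> nat" where
  "cnt n x v = card {j \<in> {1..n}. x j = v}"

definition assignments :: "nat \<Rightarrow> nat set \<Rightarrow> (nat \<Rightarrow> nat) set" where
  "assignments n V = {1..n} \<rightarrow>\<^sub>E V"

definition score :: "nat \<Rightarrow> nat set \<Rightarrow> (nat \<Rightarrow> nat \<Rightarrow> real) \<Rightarrow> real \<Rightarrow> (nat \<Rightarrow> nat) \<Rightarrow> real" where
  "score n V psi lam x = (\<Sum>j=1..n. psi j (x j)) + lam * (\<Sum>v\<in>V. xlogx (cnt n x v))"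

definition opt_score :: "nat \<Rightarrow> nat set \<Rightarrow> (nat \<Rightarrow> nat \<Rightarrow> real) \<Rightarrow> real \<Rightarrow> real" where
  "opt_score n V psi lam = Max (score n V psi lam ` assignments n V)"

definition best_other :: "nat set \<Rightarrow> (nat \<Rightarrow> nat \<Rightarrow> real) \<Rightarrow> nat \<Rightarrow> nat \<Rightarrow> real" where
  "best_other V psi alpha j = Max (psi j ` (V - {alpha}))"

definition gain :: "nat set \<Rightarrow> (nat \<Rightarrow> nat \<Rightarrow> real) \<Rightarrow> nat \<Rightarrow> nat \<Rightarrow> real" where
  "gain V psi alpha j = psi j alpha - best_other V psi alpha j"

text \<open>All assignments the alpha-pass algorithm can form, under any tie-breaking in the
  sort and in the choice of a best value different from alpha: for some alpha and some
  k in 1..n, the set S of the first k sorted vertices is a top-k set for the gain,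
  S gets alpha, every other vertex gets a maximizer of psi_j over V - {alpha}.\<close>
definition alpha_pass_candidates :: "nat \<Rightarrow> nat set \<Rightarrow> (nat \<Rightarrow> nat \<Rightarrow> real) \<Rightarrow> (nat \<Rightarrow> nat) set" where
  "alpha_pass_candidates n V psi =
     {x \<in> assignments n V. \<exists>alpha\<in>V. \<exists>S\<subseteq>{1..n}. card S \<in> {1..n} \<and>
        (\<forall>i\<in>S. \<forall>j\<in>{1..n} - S. gain V psi alpha j \<le> gain V psi alpha i) \<and>
        (\<forall>j\<in>S. x j = alpha) \<and>
        (\<forall>j\<in>{1..n} - S. x j \<in> V - {alpha} \<and> psi j (x j) = best_other V psi alpha j)}"

text \<open>Score of the alpha-pass output; taking the maximum over all candidates makes this
  the best output over all possible tie-breakings.\<close>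
definition alpha_pass_score :: "nat \<Rightarrow> nat set \<Rightarrow> (nat \<Rightarrow> nat \<Rightarrow> real) \<Rightarrow> real \<Rightarrow> real" where
  "alpha_pass_score n V psi lam = Max (score n V psi lam ` alpha_pass_candidates n V psi)"

end

theory Submission imports Defs "HOL-Real_Asymp.Real_Asymp" begin

text \<open>Vertex j of the hard instance gives potential ln n + 1 to a private value and ln n to
  the value shared by its block of about n / ln n consecutive vertices. Assigning every block
  its shared value earns the entropy term n ln (n / ln n), so the optimum is about 2 n ln n.
  In an alpha-pass assignment every vertex outside the alpha-class takes its private value:
  this is the best value other than alpha unless alpha is that private value, and then the
  vertex has gain at least 1, more than the gain -(ln n + 1) of any vertex of the alpha-class.
  Hence only the alpha-class contributes entropy, at most n ln n, and the potentials add at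
  most (n + n / ln n)(ln n + 1), so the alpha-pass score is about n ln n.\<close>

lemma finite_assignments: "finite V \<Longrightarrow> finite (assignments n V)"
  unfolding assignments_def by (intro finite_PiE) auto

lemma cnt_le: "cnt n x v \<le> n"
proof -
  have "card {j \<in> {1..n}. x j = v} \<le> card {1..n}" by (rule card_mono) auto
  thus ?thesis by (simp add: cnt_def)
qed

lemma cnt_own_value_pos:
  assumes "j \<in> {1..n}"
  shows "cnt n x (x j) \<ge> 1"
proof -
  have "{j} \<subseteq> {i \<in> {1..n}. x i = x j}" using assms by auto
  from card_mono[OF _ this] show ?thesis by (simp add: cnt_def)
qed

lemma score_as_vertex_sum:
  assumes "finite V" "x \<in> assignments n V"
  shows "score n V psi lam x = (\<Sum>j=1..n. psi j (x j) + lam * ln (real (cnt n x (x j))))"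
proof -
  have "xlogx (cnt n x v) = (\<Sum>j\<in>{j\<in>{1..n}. x j = v}. ln (real (cnt n x (x j))))" for v
    by (simp add: xlogx_def cnt_def)
  hence "(\<Sum>v\<in>V. xlogx (cnt n x v))
      = (\<Sum>v\<in>V. \<Sum>j\<in>{j\<in>{1..n}. x j = v}. ln (real (cnt n x (x j))))"
    by simp
  also have "\<dots> = (\<Sum>j=1..n. ln (real (cnt n x (x j))))"
    using sum.group[of "{1..n}" V x "\<lambda>j. ln (real (cnt n x (x j)))"] assms
    by (auto simp: assignments_def PiE_def)
  finally show ?thesis
    unfolding score_def by (simp add: sum.distrib sum_distrib_left)
qed

lemma score_le_opt_score:
  "finite V \<Longrightarrow> x \<in> assignments n V \<Longrightarrow> score n V psi lam x \<le> opt_score n V psi lam"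
  unfolding opt_score_def using finite_assignments by (intro Max_ge) auto

lemma alpha_pass_score_le:
  assumes "finite V" "alpha_pass_candidates n V psi \<noteq> {}"
    and "\<And>x. x \<in> alpha_pass_candidates n V psi \<Longrightarrow> score n V psi lam x \<le> c"
  shows "alpha_pass_score n V psi lam \<le> c"
proof -
  have "finite (alpha_pass_candidates n V psi)"
    using finite_assignments[OF assms(1)]
    by (rule finite_subset[rotated]) (auto simp: alpha_pass_candidates_def)
  thus ?thesis
    unfolding alpha_pass_score_def using assms(2,3) by (subst Max_le_iff) auto
qed

lemma best_other_eqI:
  assumes "finite V" "u \<in> V - {alpha}" "\<And>v. v \<in> V - {alpha} \<Longrightarrow> psi j v \<le> psi j u"
  shows "best_other V psi alpha j = psi j u"
  unfolding best_other_def using assms by (intro Max_eqI) auto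

lemma best_other_le:
  assumes "finite V" "V - {alpha} \<noteq> {}" "\<And>v. v \<in> V - {alpha} \<Longrightarrow> psi j v \<le> c"
  shows "best_other V psi alpha j \<le> c"
  unfolding best_other_def using assms by (subst Max_le_iff) auto

lemma div_eq_iff_nat:
  fixes m g q :: nat
  assumes "0 < g"
  shows "m div g = q \<longleftrightarrow> g * q \<le> m \<and> m < g * q + g"
  using div_nat_eqI[of g q m] times_div_less_eq_dividend[of g m]
    dividend_less_times_div[OF assms, of m]
  by auto

lemma card_block_le:
  assumes "0 < g"
  shows "card {j \<in> {1..n}. (j - 1) div g = q} \<le> g"
proof -
  have "{j \<in> {1..n}. (j - 1) div g = q} \<subseteq> {g * q + 1 .. g * q + g}"
    using div_eq_iff_nat[OF assms] by auto
  from card_mono[OF _ this] show ?thesis by simp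
qed

definition group_size :: "nat \<Rightarrow> nat" where
  "group_size n = nat \<lfloor>real n / (ln (real n) + 1)\<rfloor>"

definition hard_values :: "nat \<Rightarrow> nat set" where
  "hard_values n = {0..2 * n + 1}"

text \<open>The private value of vertex j is 2 j + 1; the vertices with block index
  (j - 1) div group_size n share the even value twice that index.\<close>
definition hard_psi :: "nat \<Rightarrow> nat \<Rightarrow> nat \<Rightarrow> real" where
  "hard_psi n j v =
     (if v = 2 * j + 1 then ln (real n) + 1
      else if v = 2 * ((j - 1) div group_size n) then ln (real n) else 0)"

lemma ln_of_nat_nonneg: "0 \<le> ln (real n)"
  by (cases "n = 0") auto

lemma group_size_pos:
  assumes "n \<ge> 1"
  shows "group_size n \<ge> 1"
proof -
  have "ln (real n) \<le> real n - 1"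
    using assms by (intro ln_le_minus_one) auto
  hence "1 \<le> real n / (ln (real n) + 1)"
    using ln_of_nat_nonneg[of n] by (simp add: field_simps)
  thus ?thesis unfolding group_size_def by linarith
qed

lemma group_size_bounds:
  "real n / (ln (real n) + 1) - 1 \<le> real (group_size n)"
  "real (group_size n) \<le> real n / (ln (real n) + 1)"
  using ln_of_nat_nonneg[of n] by (simp_all add: group_size_def of_nat_nat)

lemma group_size_le: "group_size n \<le> n"
proof -
  have "real n / (ln (real n) + 1) \<le> real n"
    using ln_of_nat_nonneg[of n] by (simp add: divide_le_eq_1 field_simps)
  thus ?thesis using group_size_bounds(2)[of n] by linarith
qed

lemma finite_hard_values: "finite (hard_values n)"
  by (simp add: hard_values_def)

lemma hard_psi_nonneg: "hard_psi n j v \<ge> 0"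
  using ln_of_nat_nonneg[of n] by (simp add: hard_psi_def)

lemma hard_psi_le_if_not_private: "v \<noteq> 2 * j + 1 \<Longrightarrow> hard_psi n j v \<le> ln (real n)"
  using ln_of_nat_nonneg[of n] by (simp add: hard_psi_def)

lemma hard_psi_eq_max_iff: "hard_psi n j v = ln (real n) + 1 \<longleftrightarrow> v = 2 * j + 1"
  using ln_of_nat_nonneg[of n] by (auto simp: hard_psi_def)

lemma hard_psi_private_of_other:
  assumes "i \<noteq> j"
  shows "hard_psi n i (2 * j + 1) = 0"
proof -
  have "2 * j + 1 \<noteq> 2 * k" for k :: nat by presburger
  with assms show ?thesis by (simp add: hard_psi_def)
qed

lemma best_other_hard_psi:
  assumes "j \<in> {1..n}" "alpha \<noteq> 2 * j + 1"
  shows "best_other (hard_values n) (hard_psi n) alpha j = ln (real n) + 1"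
proof -
  have "best_other (hard_values n) (hard_psi n) alpha j = hard_psi n j (2 * j + 1)"
    using assms ln_of_nat_nonneg[of n]
    by (intro best_other_eqI finite_hard_values) (auto simp: hard_values_def hard_psi_def)
  thus ?thesis by (simp add: hard_psi_def)
qed

lemma best_other_hard_psi_own_private:
  "best_other (hard_values n) (hard_psi n) (2 * j + 1) j \<le> ln (real n)"
  using hard_psi_le_if_not_private
  by (intro best_other_le finite_hard_values) (auto simp: hard_values_def)

lemma alpha_pass_candidate_hard_shape:
  assumes "x \<in> alpha_pass_candidates n (hard_values n) (hard_psi n)"
  obtains alpha S where "S \<subseteq> {1..n}" "\<forall>j\<in>S. x j = alpha"
    "\<forall>j\<in>{1..n} - S. x j = 2 * j + 1 \<and> x j \<noteq> alpha"
proof -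
  let ?gain = "gain (hard_values n) (hard_psi n)"
  obtain alpha S where S: "S \<subseteq> {1..n}" "S \<noteq> {}"
    and top: "\<forall>i\<in>S. \<forall>j\<in>{1..n} - S. ?gain alpha j \<le> ?gain alpha i"
    and in_S: "\<forall>j\<in>S. x j = alpha"
    and out_S: "\<forall>j\<in>{1..n} - S. x j \<in> hard_values n - {alpha}
                  \<and> hard_psi n j (x j) = best_other (hard_values n) (hard_psi n) alpha j"
    using assms unfolding alpha_pass_candidates_def by fastforce
  have "x j = 2 * j + 1" if j: "j \<in> {1..n} - S" for j
  proof (cases "alpha = 2 * j + 1")
    case False
    thus ?thesis
      using out_S j best_other_hard_psi hard_psi_eq_max_iff by (metis DiffD1)
  next
    case True
    obtain i where i: "i \<in> S" using S(2) by auto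
    with j have "i \<noteq> j" by auto
    hence "hard_psi n i alpha = 0" using True hard_psi_private_of_other by simp
    hence "?gain alpha i = - (ln (real n) + 1)"
      using i S(1) True \<open>i \<noteq> j\<close> best_other_hard_psi[of i n alpha] by (auto simp: gain_def)
    moreover have "?gain alpha j \<ge> 1"
      using True best_other_hard_psi_own_private[of n j] by (simp add: gain_def hard_psi_def)
    moreover have "?gain alpha j \<le> ?gain alpha i" using top i j by blast
    ultimately show ?thesis using ln_of_nat_nonneg[of n] by linarith
  qed
  with that S(1) in_S out_S show ?thesis by blast
qed

lemma sum_hard_psi_le:
  assumes "n \<ge> 1"
  shows "(\<Sum>j=1..n. hard_psi n j v) \<le> (1 + real (group_size n)) * (ln (real n) + 1)"
proof -
  let ?b = "ln (real n) + 1"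
  let ?block = "{j \<in> {1..n}. (j - 1) div group_size n = v div 2}"
  have "(\<Sum>j=1..n. hard_psi n j v)
      \<le> (\<Sum>j=1..n. (if v = 2 * j + 1 then ?b else 0) + (if j \<in> ?block then ?b else 0))"
    using ln_of_nat_nonneg[of n] by (intro sum_mono) (auto simp: hard_psi_def)
  also have "\<dots> = real (card {j \<in> {1..n}. v = 2 * j + 1}) * ?b + real (card ?block) * ?b"
    by (simp add: sum.distrib sum.If_cases Int_def)
  also have "\<dots> \<le> 1 * ?b + real (group_size n) * ?b"
  proof -
    have "card {j \<in> {1..n}. v = 2 * j + 1} \<le> card {v div 2}"
      by (intro card_mono) auto
    thus ?thesis
      using card_block_le[of "group_size n" n "v div 2"] group_size_pos[OF assms]
        ln_of_nat_nonneg[of n]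
      by (intro add_mono mult_right_mono) auto
  qed
  finally show ?thesis by (simp add: algebra_simps)
qed

lemma score_hard_le_if_shape:
  assumes n: "n \<ge> 1" and x: "x \<in> assignments n (hard_values n)" and S: "S \<subseteq> {1..n}"
    and in_S: "\<forall>j\<in>S. x j = alpha"
    and out_S: "\<forall>j\<in>{1..n} - S. x j = 2 * j + 1 \<and> x j \<noteq> alpha"
  shows "score n (hard_values n) (hard_psi n) 1 x
           \<le> (real n + 1 + real (group_size n)) * (ln (real n) + 1)"
proof -
  let ?b = "ln (real n) + 1"
  have vertex_le: "hard_psi n j (x j) + ln (real (cnt n x (x j))) \<le> hard_psi n j alpha + ?b"
    if j: "j \<in> {1..n}" for j
  proof (cases "j \<in> S")
    case True
    have "ln (real (cnt n x (x j))) \<le> ln (real n)"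
      using cnt_le[of n x "x j"] cnt_own_value_pos[OF j, of x] by simp
    thus ?thesis using True in_S by simp
  next
    case False
    have "i = j" if "i \<in> {1..n}" "x i = x j" for i
      using that j False in_S out_S by (cases "i \<in> S") auto
    hence "{i \<in> {1..n}. x i = x j} = {j}" using j by auto
    hence "cnt n x (x j) = 1" by (simp add: cnt_def)
    thus ?thesis
      using j False out_S hard_psi_nonneg[of n j alpha] by (simp add: hard_psi_def)
  qed
  have "score n (hard_values n) (hard_psi n) 1 x
      = (\<Sum>j=1..n. hard_psi n j (x j) + ln (real (cnt n x (x j))))"
    using score_as_vertex_sum[OF finite_hard_values x] by simp
  also have "\<dots> \<le> (\<Sum>j=1..n. hard_psi n j alpha + ?b)"
    by (intro sum_mono vertex_le)
  also have "\<dots> = (\<Sum>j=1..n. hard_psi n j alpha) + real n * ?b"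
    by (simp add: sum.distrib)
  also have "\<dots> \<le> (1 + real (group_size n)) * ?b + real n * ?b"
    using sum_hard_psi_le[OF n, of alpha] by simp
  finally show ?thesis by (simp add: algebra_simps)
qed

lemma alpha_pass_score_hard_le:
  assumes n: "n \<ge> 1"
  shows "alpha_pass_score n (hard_values n) (hard_psi n) 1
           \<le> (real n + 1) * (ln (real n) + 1) + real n"
proof -
  let ?x0 = "restrict (\<lambda>j. 0) {1..n}"
  have x0: "?x0 \<in> alpha_pass_candidates n (hard_values n) (hard_psi n)"
    unfolding alpha_pass_candidates_def
    by (intro CollectI conjI bexI[of _ 0] exI[of _ "{1..n}"])
       (use n in \<open>auto simp: assignments_def hard_values_def\<close>)
  have "alpha_pass_score n (hard_values n) (hard_psi n) 1
           \<le> (real n + 1 + real (group_size n)) * (ln (real n) + 1)"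
  proof (rule alpha_pass_score_le[OF finite_hard_values])
    show "alpha_pass_candidates n (hard_values n) (hard_psi n) \<noteq> {}" using x0 by blast
  next
    fix x assume x: "x \<in> alpha_pass_candidates n (hard_values n) (hard_psi n)"
    hence "x \<in> assignments n (hard_values n)" by (simp add: alpha_pass_candidates_def)
    with x show "score n (hard_values n) (hard_psi n) 1 x
                   \<le> (real n + 1 + real (group_size n)) * (ln (real n) + 1)"
      by (elim alpha_pass_candidate_hard_shape) (rule score_hard_le_if_shape[OF n])
  qed
  moreover have "real (group_size n) * (ln (real n) + 1) \<le> real n"
    using group_size_bounds(2)[of n] ln_of_nat_nonneg[of n] by (simp add: field_simps)
  ultimately show ?thesis by (simp add: algebra_simps)
qed

lemma opt_score_hard_ge_blocks:
  assumes n: "n \<ge> 1"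
  shows "opt_score n (hard_values n) (hard_psi n) 1
           \<ge> real n * ln (real n) + real (n - group_size n) * ln (real (group_size n))"
proof -
  let ?g = "group_size n"
  have g: "0 < ?g" using group_size_pos[OF n] by simp
  define y where "y = restrict (\<lambda>j. 2 * ((j - 1) div ?g)) {1..n}"
  have "2 * ((j - 1) div ?g) \<le> 2 * n + 1" if "j \<in> {1..n}" for j
    using that div_le_dividend[of "j - 1" ?g] unfolding atLeastAtMost_iff by linarith
  hence y: "y \<in> assignments n (hard_values n)"
    by (auto simp: assignments_def y_def hard_values_def)
  have psi_y: "hard_psi n j (y j) = ln (real n)" if "j \<in> {1..n}" for j
  proof -
    have "2 * k \<noteq> 2 * j + 1" for k :: nat by presburger
    thus ?thesis using that by (simp add: y_def hard_psi_def)
  qed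
  have cnt_y: "cnt n y (y j) \<ge> ?g" if j: "j \<in> {1..n - ?g}" for j
  proof -
    let ?q = "(j - 1) div ?g"
    have "?g * ?q \<le> j - 1" using div_eq_iff_nat[OF g] by blast
    have "i \<in> {i \<in> {1..n}. y i = y j}" if i: "i \<in> {?g * ?q + 1 .. ?g * ?q + ?g}" for i
    proof -
      have "(i - 1) div ?g = ?q" using i div_eq_iff_nat[OF g] by auto
      moreover have "i \<le> n" using i j \<open>?g * ?q \<le> j - 1\<close> unfolding atLeastAtMost_iff by arith
      ultimately show ?thesis using i j by (auto simp: y_def)
    qed
    hence "{?g * ?q + 1 .. ?g * ?q + ?g} \<subseteq> {i \<in> {1..n}. y i = y j}" by blast
    from card_mono[OF _ this] show ?thesis unfolding cnt_def by simp
  qed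
  have "real (n - ?g) * ln (real ?g) = (\<Sum>j=1..n - ?g. ln (real ?g))"
    by simp
  also have "\<dots> \<le> (\<Sum>j=1..n - ?g. ln (real (cnt n y (y j))))"
  proof (rule sum_mono)
    fix j assume "j \<in> {1..n - ?g}"
    hence "real ?g \<le> real (cnt n y (y j))" using cnt_y by simp
    thus "ln (real ?g) \<le> ln (real (cnt n y (y j)))" using g by simp
  qed
  also have "\<dots> \<le> (\<Sum>j=1..n. ln (real (cnt n y (y j))))"
    using cnt_own_value_pos by (intro sum_mono2) auto
  finally have "real n * ln (real n) + real (n - ?g) * ln (real ?g)
      \<le> score n (hard_values n) (hard_psi n) 1 y"
    using score_as_vertex_sum[OF finite_hard_values y] psi_y by (simp add: sum.distrib)
  also have "\<dots> \<le> opt_score n (hard_values n) (hard_psi n) 1"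
    by (rule score_le_opt_score[OF finite_hard_values y])
  finally show ?thesis .
qed

lemma opt_score_hard_ge:
  assumes large: "real n / (ln (real n) + 1) \<ge> 2"
  shows "opt_score n (hard_values n) (hard_psi n) 1
           \<ge> real n * ln (real n)
             + (real n - real n / (ln (real n) + 1)) * ln (real n / (ln (real n) + 1) - 1)"
proof -
  let ?t = "real n / (ln (real n) + 1)"
  have "n \<ge> 1" using large by (cases n) auto
  have "real n - ?t \<le> real (n - group_size n)"
    using group_size_bounds(2)[of n] group_size_le[of n] by simp
  moreover have "ln (?t - 1) \<le> ln (real (group_size n))"
    using group_size_bounds(1)[of n] large by simp
  moreover have "0 \<le> real n - ?t"
    using ln_of_nat_nonneg[of n] by (simp add: field_simps)
  moreover have "0 \<le> ln (?t - 1)" using large by simp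
  ultimately have "(real n - ?t) * ln (?t - 1) \<le> real (n - group_size n) * ln (real (group_size n))"
    by (intro mult_mono) auto
  thus ?thesis using opt_score_hard_ge_blocks[OF \<open>n \<ge> 1\<close>] by linarith
qed

theorem theorem8:
  shows "\<exists>(Vs :: nat \<Rightarrow> nat set) (psi :: nat \<Rightarrow> nat \<Rightarrow> nat \<Rightarrow> real) (lam :: real).
     lam > 0 \<and>
     (\<forall>n. finite (Vs n) \<and> card (Vs n) \<ge> 2 \<and> (\<forall>j v. psi n j v \<ge> 0)) \<and>
     (\<forall>\<^sub>F n in sequentially. opt_score n (Vs n) (psi n) lam > 0) \<and>
     (\<forall>e>0. \<forall>\<^sub>F n in sequentially.
        alpha_pass_score n (Vs n) (psi n) lam / opt_score n (Vs n) (psi n) lam \<le> 1/2 + e)"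
proof (intro exI[of _ hard_values] exI[of _ hard_psi] exI[of _ "1::real"] conjI allI impI)
  let ?upper = "\<lambda>n::nat. (real n + 1) * (ln (real n) + 1) + real n"
  let ?lower = "\<lambda>n::nat. real n * ln (real n)
     + (real n - real n / (ln (real n) + 1)) * ln (real n / (ln (real n) + 1) - 1)"
  have large: "\<forall>\<^sub>F n in sequentially. real n / (ln (real n) + 1) \<ge> 2"
    by real_asymp
  have lower_pos: "\<forall>\<^sub>F n in sequentially. ?lower n > 0"
    by real_asymp
  have ratio: "(\<lambda>n. ?upper n / ?lower n) \<longlonglongrightarrow> 1/2"
    by real_asymp
  show "\<forall>\<^sub>F n in sequentially. opt_score n (hard_values n) (hard_psi n) 1 > 0"
    using large lower_pos by eventually_elim (use opt_score_hard_ge in force)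
  fix e :: real assume "e > 0"
  with ratio have "\<forall>\<^sub>F n in sequentially. ?upper n / ?lower n < 1/2 + e"
    by (simp add: order_tendstoD(2))
  with large lower_pos eventually_ge_at_top[of 1]
  show "\<forall>\<^sub>F n in sequentially. alpha_pass_score n (hard_values n) (hard_psi n) 1
          / opt_score n (hard_values n) (hard_psi n) 1 \<le> 1/2 + e"
  proof eventually_elim
    case (elim n)
    have "alpha_pass_score n (hard_values n) (hard_psi n) 1
          / opt_score n (hard_values n) (hard_psi n) 1 \<le> ?upper n / ?lower n"
      using elim alpha_pass_score_hard_le opt_score_hard_ge ln_of_nat_nonneg[of n]
      by (intro frac_le) auto
    with elim show ?case by linarith
  qed
qed (auto simp: finite_hard_values hard_values_def hard_psi_nonneg)

end
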